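(* Let $G$ be a finite additive group (not necessarily abelian) and let $\mathcal X$ be a Hadamard $(G,K,\lambda)$-PDF. Then $\{{}^2X \mid X\in\mathcal X\}$ is a $(G,2K,4\lambda)$ strong difference family.
   Context: Multisets: the multiset sum $X\uplus Y$ adds multiplicities; ${}^\mu X$ denotes the multiset sum of $\mu$ copies of $X$ (so ${}^2X$ is $X$ with every element taken twice). For a multiset $X=\{x_1,\dots,x_k\}$ on $G$, $\Delta X$ is the multiset of all $x_i-x_j$ over ordered pairs $(i,j)$ of distinct indices; for a collection $\mathcal X$, $\Delta\mathcal X=\biguplus_{X\in\mathcal X}\Delta X$. A $(G,K,\lambda)$-PDF is a collection of subsets of $G$ partitioning $G$, with multiset of block sizes $K$, such that $\Delta\mathcal X={}^\lambda(G\setminus\{0\})$; it is Hadamard if $|G|=2\lambda$. A $(G,K,\mu)$ strong difference family (SDF) is a collection $\mathcal Y$ of multisubsets of $G$ with multiset of sizes $K$ such that $\Delta\mathcal Y={}^\mu G$ (every element of $G$, including $0$, occurs exactly $\mu$ times). For a multiset $K$ of integers, $2K$ is the multiset $\{2k : k\in K\}$. *)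

theory Defs
  imports Main "HOL-Library.Multiset"
begin

text \<open>Difference multiset of a multiset X = {x_1,...,x_k}: all x_i - x_j over
  ordered pairs (i,j) of distinct indices. For each occurrence x we pair it with
  the remaining occurrences X - {x}.\<close>
definition diff_ms :: "'a::group_add multiset \<Rightarrow> 'a multiset" where
  "diff_ms X = (\<Sum>x\<in>#X. \<Sum>y\<in>#(X - {#x#}). {#x - y#})"

definition diff_coll :: "'a::group_add multiset multiset \<Rightarrow> 'a multiset" where
  "diff_coll Y = (\<Sum>X\<in>#Y. diff_ms X)"

definition is_PDF :: "'a::{group_add,finite} set set \<Rightarrow> nat multiset \<Rightarrow> nat \<Rightarrow> bool" where
  "is_PDF XX K lam \<longleftrightarrow>
     \<Union>XX = UNIV \<and> {} \<notin> XX \<and>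
     (\<forall>A\<in>XX. \<forall>B\<in>XX. A \<noteq> B \<longrightarrow> A \<inter> B = {}) \<and>
     image_mset card (mset_set XX) = K \<and>
     diff_coll (image_mset mset_set (mset_set XX)) = repeat_mset lam (mset_set (UNIV - {0}))"

definition is_Hadamard_PDF :: "'a::{group_add,finite} set set \<Rightarrow> nat multiset \<Rightarrow> nat \<Rightarrow> bool" where
  "is_Hadamard_PDF XX K lam \<longleftrightarrow> is_PDF XX K lam \<and> card (UNIV :: 'a set) = 2 * lam"

definition is_SDF :: "'a::{group_add,finite} multiset multiset \<Rightarrow> nat multiset \<Rightarrow> nat \<Rightarrow> bool" where
  "is_SDF YY K mu \<longleftrightarrow>
     image_mset size YY = K \<and> diff_coll YY = repeat_mset mu (mset_set (UNIV :: 'a set))"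

end

theory Submission
  imports Defs
begin

text \<open>Doubling a block only adds zero differences: in \<open>X + X\<close> each occurrence of \<open>x\<close>
  is paired once with its own copy, giving \<open>0\<close>, and twice with every other element of \<open>X\<close>,
  so \<open>\<Delta>(X + X)\<close> consists of \<open>2|X|\<close> zeros and four copies of \<open>\<Delta>X\<close>. Summed over the blocks of
  a partition of \<open>G\<close> this gives \<open>2|G|\<close> zeros, and for a Hadamard PDF \<open>2|G| = 4\<lambda>\<close>: exactly
  the zeros missing from \<open>4\<lambda>\<close> copies of \<open>G \<setminus> {0}\<close>.\<close>

lemma sum_mset_image_repeat_mset:
  "(\<Sum>x\<in>#A. repeat_mset n (f x)) = repeat_mset n (\<Sum>x\<in>#A. f x)"
  by (induction A) auto

lemma sum_mset_image_replicate_mset: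
  "(\<Sum>x\<in>#A. replicate_mset (f x) c) = replicate_mset (\<Sum>x\<in>#A. f x) c"
  by (induction A) (auto simp: multiset_eq_iff)

lemma diff_ms_add_self:
  fixes M :: "'a::group_add multiset"
  shows "diff_ms (M + M) = replicate_mset (2 * size M) 0 + repeat_mset 4 (diff_ms M)"
proof -
  define D where "D x = (\<Sum>y\<in>#(M - {#x#}). {#x - y#})" for x
  have diffs_from: "(\<Sum>y\<in>#(M + M - {#x#}). {#x - y#}) = {#0#} + D x + D x" if x_in: "x \<in># M" for x
  proof -
    obtain N where "M = add_mset x N"
      using multi_member_split[OF x_in] by blast
    then show ?thesis by (simp add: D_def)
  qed
  have "diff_ms (M + M) = (\<Sum>x\<in>#M + M. {#0#} + D x + D x)"
    unfolding diff_ms_def using diffs_from by (intro arg_cong[where f = sum_mset] image_mset_cong) auto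
  also have "\<dots> = repeat_mset 2 (\<Sum>x\<in>#M. {#0#} + D x + D x)"
    by (simp add: numeral_2_eq_2)
  also have "(\<Sum>x\<in>#M. {#0#} + D x + D x) = (\<Sum>x\<in>#M. {#0#}) + diff_ms M + diff_ms M"
    by (simp only: diff_ms_def D_def sum_mset.distrib)
  also have "(\<Sum>x\<in>#M. {#0#}) = replicate_mset (size M) 0"
    by (induction M) auto
  finally show ?thesis by (simp add: multiset_eq_iff)
qed

lemma diff_coll_add_self:
  fixes Y :: "'a::group_add multiset multiset"
  shows "diff_coll (image_mset (\<lambda>X. X + X) Y)
    = replicate_mset (2 * (\<Sum>X\<in>#Y. size X)) 0 + repeat_mset 4 (diff_coll Y)"
  by (simp add: diff_coll_def diff_ms_add_self multiset.map_comp o_def sum_mset.distrib sum_mset_image_repeat_mset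
      sum_mset_image_replicate_mset sum_mset_distrib_left)

lemma PDF_sum_block_sizes:
  fixes XX :: "'a::{group_add,finite} set set"
  assumes "is_PDF XX K lam"
  shows "sum_mset K = card (UNIV :: 'a set)"
proof -
  have partition: "\<Union>XX = UNIV" "pairwise disjnt XX" and sizes: "image_mset card (mset_set XX) = K"
    using assms unfolding is_PDF_def pairwise_def disjnt_def by auto
  have "sum_mset K = sum card XX"
    by (simp add: sizes[symmetric] sum_unfold_sum_mset)
  also have "\<dots> = card (\<Union>XX)"
    using partition(2) by (simp add: card_Union_disjoint)
  finally show ?thesis using partition(1) by simp
qed

theorem proposition2p2:
  fixes XX :: "'a::{group_add,finite} set set" and K :: "nat multiset" and lam :: nat
  assumes "is_Hadamard_PDF XX K lam"
  shows "is_SDF (image_mset (\<lambda>X. repeat_mset 2 (mset_set X)) (mset_set XX))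
                (image_mset (\<lambda>k. 2 * k) K) (4 * lam)"
proof -
  let ?Y = "image_mset mset_set (mset_set XX)"
  have PDF: "is_PDF XX K lam" and order: "card (UNIV :: 'a set) = 2 * lam"
    using assms unfolding is_Hadamard_PDF_def by auto
  have sizes: "image_mset size ?Y = K" and diffs: "diff_coll ?Y = repeat_mset lam (mset_set (UNIV - {0}))"
    using PDF unfolding is_PDF_def by (auto simp: multiset.map_comp o_def)
  have doubled: "image_mset (\<lambda>X. repeat_mset 2 (mset_set X)) (mset_set XX) = image_mset (\<lambda>X. X + X) ?Y"
    by (simp add: multiset.map_comp o_def numeral_2_eq_2)
  have "(\<Sum>X\<in>#?Y. size X) = 2 * lam"
    using PDF_sum_block_sizes[OF PDF] order sizes by simp
  then have "diff_coll (image_mset (\<lambda>X. X + X) ?Y)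
      = replicate_mset (4 * lam) 0 + repeat_mset (4 * lam) (mset_set (UNIV - {0}))"
    by (simp add: diff_coll_add_self diffs)
  also have "\<dots> = repeat_mset (4 * lam) (mset_set UNIV)"
    by (simp add: multiset_eq_iff count_mset_set)
  finally show ?thesis
    unfolding is_SDF_def doubled sizes[symmetric] by (simp add: multiset.map_comp o_def flip: mult_2)
qed

end
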